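(* Let $G$ be a finitely generated residually finite group with profinite completion $\hat G$, let $H$ be a finite group, let $\bar w\in F^r(y_1,\dots,y_k,x_1,\dots,x_n)\cap Sys(Fin)$, and let $\bar a\in\hat G^k$. Then there exists $\bar u\in\hat G^n$ such that for every $N\in\mathfrak{M}$ and every $\bar f\in (H^{G_N})^k$ there exists $\bar\phi\in (H^{G_N})^n$ with $\bar w((\bar f,\bar a_N),(\bar\phi,\bar u_N))=1$ in $H\wr G_N$. (Such $\bar u$ is called an $(H,\bar a)$-universal solution of $\bar w$.)
   Context: $F=F(\bar y,\bar x)$ is the free group on constant symbols $y_1,\dots,y_k$ and variable symbols $x_1,\dots,x_n$; $\bar w\in F^r$ is a system of equations, evaluated by substitution in any group. $Sys(Fin)$ is the set of finite systems $\bar w$ solvable in every finite group $Q$, i.e. for every $\bar c\in Q^k$ there is $\bar z\in Q^n$ with $\bar w(\bar c,\bar z)=1$. $\mathfrak{M}$ is the set of normal subgroups of finite index of $G$; for $N\in\mathfrak{M}$, $G_N=G/N$, and $\eta_N:\hat G\to G_N$ is the canonical epimorphism from the profinite completion $\hat G=\varprojlim G_N$. For $g\in\hat G$, $g_N=\eta_N(g)$, and for tuples $\bar g=(g_1,\dots,g_m)$, $\bar g_N=((g_1)_N,\dots,(g_m)_N)$. For $\bar f=(f_1,\dots,f_m)\in (H^{G_N})^m$ and $\bar g\in G_N^m$, $(\bar f,\bar g)=((f_1,g_1),\dots,(f_m,g_m))\in (H\wr G_N)^m$. The wreath product $H\wr Q$ is $H^Q\rtimes Q$ with $(g.f)(x)=f(xg)$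 and $(f,g)(f',g')=(f\,(g.f'),gg')$. *)

theory Defs
  imports "HOL-Algebra.Algebra" "HOL-Library.FuncSet"
begin

text \<open>Words of the free group F(y_1..y_k, x_1..x_n): a letter is (Inl i, e) for the
constant y_i (i < k) or (Inr j, e) for the variable x_j (j < n); e = True means the
generator itself, e = False its inverse. Indices are 0-based.\<close>

type_synonym letter = "(nat + nat) \<times> bool"
type_synonym word = "letter list"

definition word_in :: "nat \<Rightarrow> nat \<Rightarrow> word \<Rightarrow> bool" where
  "word_in k n w \<longleftrightarrow>
     (\<forall>l \<in> set w. case fst l of Inl i \<Rightarrow> i < k | Inr j \<Rightarrow> j < n)"

fun eval_word :: "('g, 'b) monoid_scheme \<Rightarrow> (nat \<Rightarrow> 'g) \<Rightarrow> (nat \<Rightarrow> 'g) \<Rightarrow> word \<Rightarrow> 'g" where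
  "eval_word Q c z [] = \<one>\<^bsub>Q\<^esub>"
| "eval_word Q c z ((s, e) # w) =
     (let g = (case s of Inl i \<Rightarrow> c i | Inr j \<Rightarrow> z j)
      in (if e then g else inv\<^bsub>Q\<^esub> g) \<otimes>\<^bsub>Q\<^esub> eval_word Q c z w)"

text \<open>Sys(Fin): systems solvable in every finite group. Every finite group is isomorphic
to one whose carrier is a set of naturals, so quantifying over groups on nat suffices.\<close>
definition sys_fin :: "nat \<Rightarrow> nat \<Rightarrow> word list \<Rightarrow> bool" where
  "sys_fin k n ws \<longleftrightarrow>
     (\<forall>Q :: nat monoid. group Q \<and> finite (carrier Q) \<longrightarrow>
        (\<forall>c. (\<forall>i<k. c i \<in> carrier Q) \<longrightarrow>
           (\<exists>z. (\<forall>j<n. z j \<in> carrier Q) \<and> (\<forall>w \<in> set ws. eval_word Q c z w = \<one>\<^bsub>Q\<^esub>))))"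

definition finitely_generated :: "('a, 'b) monoid_scheme \<Rightarrow> bool" where
  "finitely_generated G \<longleftrightarrow> (\<exists>S. finite S \<and> S \<subseteq> carrier G \<and> generate G S = carrier G)"

definition fin_index_normals :: "('a, 'b) monoid_scheme \<Rightarrow> 'a set set" where
  "fin_index_normals G = {N. N \<lhd> G \<and> finite (rcosets\<^bsub>G\<^esub> N)}"

definition residually_finite :: "('a, 'b) monoid_scheme \<Rightarrow> bool" where
  "residually_finite G \<longleftrightarrow>
     (\<forall>g \<in> carrier G. g \<noteq> \<one>\<^bsub>G\<^esub> \<longrightarrow> (\<exists>N \<in> fin_index_normals G. g \<notin> N))"

text \<open>Profinite completion (as a set): the inverse limit of the G/N, N in \<frak>M, i.e.
compatible families (g_N) with g_N in G/N and g_N mapped to g_N' whenever N \<subseteq> N'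
(the canonical map G/N \<rightarrow> G/N' sends a coset to the unique N'-coset containing it).
The projection \<eta>_N is evaluation at N.\<close>
definition profinite_completion :: "('a, 'b) monoid_scheme \<Rightarrow> ('a set \<Rightarrow> 'a set) set" where
  "profinite_completion G =
     {g. (\<forall>N \<in> fin_index_normals G. g N \<in> carrier (G Mod N))
       \<and> (\<forall>N \<in> fin_index_normals G. \<forall>N' \<in> fin_index_normals G. N \<subseteq> N' \<longrightarrow> g N \<subseteq> g N')
       \<and> (\<forall>N. N \<notin> fin_index_normals G \<longrightarrow> g N = undefined)}"

text \<open>Wreath product H \<wr> Q = H^Q \<rtimes> Q with (g.f)(x) = f(xg),
(f,g)(f',g') = (f (g.f'), gg').\<close>
definition wreath :: "('h, 'c) monoid_scheme \<Rightarrow> ('q, 'd) monoid_scheme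
                       \<Rightarrow> (('q \<Rightarrow> 'h) \<times> 'q) monoid" where
  "wreath H Q =
     \<lparr>carrier = (carrier Q \<rightarrow>\<^sub>E carrier H) \<times> carrier Q,
      monoid.mult = (\<lambda>(f, g) (f', g'). ((\<lambda>x \<in> carrier Q. f x \<otimes>\<^bsub>H\<^esub> f' (x \<otimes>\<^bsub>Q\<^esub> g)), g \<otimes>\<^bsub>Q\<^esub> g')),
      one = ((\<lambda>x \<in> carrier Q. \<one>\<^bsub>H\<^esub>), \<one>\<^bsub>Q\<^esub>)\<rparr>"

end

theory Submission
  imports Defs "HOL-Algebra.Weak_Morphisms" "HOL-Analysis.Function_Topology"
    "HOL-Analysis.Product_Topology"
begin

text \<open>Take finitely many \<open>N \<in> \<frak>M\<close> and some \<open>M \<in> \<frak>M\<close> below all of them. Let \<open>G\<^sub>M\<close>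
  act, through the projections \<open>G\<^sub>M \<rightarrow> G\<^sub>N\<close>, on the disjoint union of copies of \<open>G\<^sub>N\<close>, one for
  each \<open>N\<close> and each \<open>k\<close>-tuple \<open>t\<close> of functions \<open>G\<^sub>N \<rightarrow> H\<close>. The permutational wreath product
  of \<open>H\<close> and \<open>G\<^sub>M\<close> over this set is finite, so the system has a solution there whose \<open>i\<close>-th
  constant is \<open>t\<^sub>i\<close> on the copy of \<open>(N, t)\<close> and \<open>(a\<^sub>i)\<^sub>M\<close> in \<open>G\<^sub>M\<close>. Restricting to the copy
  of \<open>(N, f)\<close> is a homomorphism to the wreath product of \<open>H\<close> and \<open>G\<^sub>N\<close>, so the \<open>G\<^sub>M\<close>-part of that solution projects
  to a universal solution in every \<open>G\<^sub>N\<close>. Thus the finite sets of universal solutions in the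
  \<open>G\<^sub>N\<^sup>n\<close> admit compatible choices on every finite subfamily, hence, by compactness of their
  product, on all of \<open>\<frak>M\<close>; such a choice is an \<open>n\<close>-tuple in the profinite completion.\<close>

section \<open>Evaluating words\<close>

lemma eval_word_cong:
  assumes "word_in k n w" "\<And>i. i < k \<Longrightarrow> c i = c' i" "\<And>j. j < n \<Longrightarrow> z j = z' j"
  shows "eval_word Q c z w = eval_word Q c' z' w"
  using assms
  by (induction Q c z w rule: eval_word.induct) (auto simp: word_in_def split: sum.splits)

lemma eval_word_closed:
  assumes "group Q" "word_in k n w" "\<forall>i<k. c i \<in> carrier Q" "\<forall>j<n. z j \<in> carrier Q"
  shows "eval_word Q c z w \<in> carrier Q"
  using assms by (induction Q c z w rule: eval_word.induct)
    (auto simp: word_in_def Let_def split: sum.splits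
      intro!: monoid.m_closed group.is_monoid group.inv_closed)

lemma eval_word_hom:
  assumes "group A" "group B" "h \<in> hom A B" "word_in k n w"
    and "\<forall>i<k. c i \<in> carrier A" "\<forall>j<n. z j \<in> carrier A"
  shows "h (eval_word A c z w) = eval_word B (h \<circ> c) (h \<circ> z) w"
proof -
  interpret group_hom A B h
    using assms(1-3) by (simp add: group_hom_def group_hom_axioms_def)
  show ?thesis
    using assms(4)
  proof (induction w)
    case (Cons l w)
    obtain s e where l: "l = (s, e)" by fastforce
    have w: "word_in k n w" and s: "case s of Inl i \<Rightarrow> i < k | Inr j \<Rightarrow> j < n"
      using Cons.prems by (auto simp: word_in_def l)
    have "eval_word A c z w \<in> carrier A"
      using eval_word_closed[OF assms(1) w assms(5,6)] .
    then show ?case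
      using Cons.IH[OF w] s assms(5,6) by (cases s) (auto simp: l Let_def)
  qed simp
qed

lemma sys_fin_solvable:
  fixes Q :: "('q, 'r) monoid_scheme"
  assumes "sys_fin k n ws" "group Q" "finite (carrier Q)" "\<forall>w \<in> set ws. word_in k n w"
    and "\<forall>i<k. c i \<in> carrier Q"
  shows "\<exists>z. (\<forall>j<n. z j \<in> carrier Q) \<and> (\<forall>w \<in> set ws. eval_word Q c z w = \<one>\<^bsub>Q\<^esub>)"
proof -
  obtain e :: "'q \<Rightarrow> nat" where e: "inj_on e (carrier Q)"
    using finite_imp_inj_to_nat_seg[OF assms(3)] by blast
  define Q' where "Q' = image_group e Q"
  have Q': "group Q'" "finite (carrier Q')"
    using group.inj_imp_image_group_is_group[OF assms(2) e] assms(3)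
    by (simp_all add: Q'_def image_group_carrier)
  have hom: "e \<in> hom Q Q'"
    using inj_imp_image_group_iso[OF e] by (simp add: Q'_def iso_def)
  have "\<forall>i<k. (e \<circ> c) i \<in> carrier Q'"
    using assms(5) by (auto simp: Q'_def image_group_carrier)
  then obtain z' where z': "\<forall>j<n. z' j \<in> carrier Q'"
    "\<forall>w \<in> set ws. eval_word Q' (e \<circ> c) z' w = \<one>\<^bsub>Q'\<^esub>"
    using assms(1) Q' unfolding sys_fin_def by blast
  define z where "z j = inv_into (carrier Q) e (z' j)" for j
  have z: "\<forall>j<n. z j \<in> carrier Q" and ez: "\<And>j. j < n \<Longrightarrow> (e \<circ> z) j = z' j"
    using z'(1) by (auto simp: z_def Q'_def image_group_carrier inv_into_into f_inv_into_f)
  have "eval_word Q c z w = \<one>\<^bsub>Q\<^esub>" if w: "w \<in> set ws" for w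
  proof -
    have wi: "word_in k n w" using w assms(4) by blast
    have "e (eval_word Q c z w) = eval_word Q' (e \<circ> c) (e \<circ> z) w"
      by (rule eval_word_hom[OF assms(2) Q'(1) hom wi assms(5) z])
    also have "\<dots> = eval_word Q' (e \<circ> c) z' w"
      using ez by (intro eval_word_cong[OF wi]) auto
    also have "\<dots> = e \<one>\<^bsub>Q\<^esub>"
      using z'(2) w by (simp add: Q'_def image_group_one)
    finally show ?thesis
      using e eval_word_closed[OF assms(2) wi assms(5) z] monoid.one_closed[of Q] assms(2)
      by (meson group.is_monoid inj_onD)
  qed
  then show ?thesis using z by blast
qed

section \<open>Permutational wreath products\<close>

definition perm_wreath :: "('h, 'c) monoid_scheme \<Rightarrow> ('q, 'd) monoid_scheme \<Rightarrow> 'x set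
    \<Rightarrow> ('x \<Rightarrow> 'q \<Rightarrow> 'x) \<Rightarrow> (('x \<Rightarrow> 'h) \<times> 'q) monoid" where
  "perm_wreath H Q \<Omega> act =
     \<lparr>carrier = (\<Omega> \<rightarrow>\<^sub>E carrier H) \<times> carrier Q,
      monoid.mult = (\<lambda>(f, g) (f', g'). ((\<lambda>x \<in> \<Omega>. f x \<otimes>\<^bsub>H\<^esub> f' (act x g)), g \<otimes>\<^bsub>Q\<^esub> g')),
      one = ((\<lambda>x \<in> \<Omega>. \<one>\<^bsub>H\<^esub>), \<one>\<^bsub>Q\<^esub>)\<rparr>"

lemma wreath_eq_perm_wreath: "wreath H Q = perm_wreath H Q (carrier Q) (\<lambda>x g. x \<otimes>\<^bsub>Q\<^esub> g)"
  by (simp add: wreath_def perm_wreath_def)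

lemma carrier_wreath: "carrier (wreath H Q) = (carrier Q \<rightarrow>\<^sub>E carrier H) \<times> carrier Q"
  by (simp add: wreath_def)

lemma group_perm_wreath:
  assumes H: "group H" and Q: "group Q"
    and closed: "\<And>x g. x \<in> \<Omega> \<Longrightarrow> g \<in> carrier Q \<Longrightarrow> act x g \<in> \<Omega>"
    and one: "\<And>x. x \<in> \<Omega> \<Longrightarrow> act x \<one>\<^bsub>Q\<^esub> = x"
    and compose: "\<And>x g g'. x \<in> \<Omega> \<Longrightarrow> g \<in> carrier Q \<Longrightarrow> g' \<in> carrier Q \<Longrightarrow>
      act (act x g) g' = act x (g \<otimes>\<^bsub>Q\<^esub> g')"
  shows "group (perm_wreath H Q \<Omega> act)" (is "group ?W")
proof -
  interpret H: group H by (rule H)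
  interpret Q: group Q by (rule Q)
  show ?thesis
  proof (rule groupI)
    fix x y assume "x \<in> carrier ?W" "y \<in> carrier ?W"
    then show "x \<otimes>\<^bsub>?W\<^esub> y \<in> carrier ?W"
      using closed by (auto simp: perm_wreath_def PiE_iff)
  next
    show "\<one>\<^bsub>?W\<^esub> \<in> carrier ?W" by (auto simp: perm_wreath_def)
  next
    fix x y z assume "x \<in> carrier ?W" "y \<in> carrier ?W" "z \<in> carrier ?W"
    then show "x \<otimes>\<^bsub>?W\<^esub> y \<otimes>\<^bsub>?W\<^esub> z = x \<otimes>\<^bsub>?W\<^esub> (y \<otimes>\<^bsub>?W\<^esub> z)"
      using closed compose
      by (auto simp: perm_wreath_def Q.m_assoc H.m_assoc PiE_iff intro!: ext)
  next
    fix x assume "x \<in> carrier ?W"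
    then show "\<one>\<^bsub>?W\<^esub> \<otimes>\<^bsub>?W\<^esub> x = x"
      using one by (auto simp: perm_wreath_def PiE_iff extensional_def intro!: ext)
  next
    fix x assume "x \<in> carrier ?W"
    then obtain f g where x: "x = (f, g)" "f \<in> \<Omega> \<rightarrow>\<^sub>E carrier H" "g \<in> carrier Q"
      by (auto simp: perm_wreath_def)
    let ?y = "((\<lambda>x' \<in> \<Omega>. inv\<^bsub>H\<^esub> f (act x' (inv\<^bsub>Q\<^esub> g))), inv\<^bsub>Q\<^esub> g)"
    have "?y \<in> carrier ?W" "?y \<otimes>\<^bsub>?W\<^esub> x = \<one>\<^bsub>?W\<^esub>"
      using x closed compose one by (auto simp: perm_wreath_def PiE_iff intro!: ext)
    then show "\<exists>y \<in> carrier ?W. y \<otimes>\<^bsub>?W\<^esub> x = \<one>\<^bsub>?W\<^esub>" by blast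
  qed
qed

lemma group_wreath:
  assumes "group H" "group Q"
  shows "group (wreath H Q)"
proof -
  interpret Q: group Q by (rule assms(2))
  show ?thesis
    unfolding wreath_eq_perm_wreath by (rule group_perm_wreath[OF assms]) (simp_all add: Q.m_assoc)
qed

lemma perm_wreath_pullback_hom:
  assumes "p \<in> hom Q1 Q2" "\<And>y. y \<in> Y \<Longrightarrow> \<iota> y \<in> \<Omega>"
    and "\<And>y q. y \<in> Y \<Longrightarrow> q \<in> carrier Q2 \<Longrightarrow> act2 y q \<in> Y"
    and "\<And>y g. y \<in> Y \<Longrightarrow> g \<in> carrier Q1 \<Longrightarrow> act1 (\<iota> y) g = \<iota> (act2 y (p g))"
  shows "(\<lambda>(f, g). ((\<lambda>y \<in> Y. f (\<iota> y)), p g))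
    \<in> hom (perm_wreath H Q1 \<Omega> act1) (perm_wreath H Q2 Y act2)"
  using assms hom_in_carrier[OF assms(1)] unfolding hom_def
  by (auto simp: perm_wreath_def PiE_iff intro!: ext)

definition sum_action :: "('i \<Rightarrow> ('q, 'e) monoid_scheme) \<Rightarrow> ('i \<Rightarrow> 'p \<Rightarrow> 'q)
    \<Rightarrow> 'i \<times> 'q \<Rightarrow> 'p \<Rightarrow> 'i \<times> 'q" where
  "sum_action Q \<pi> = (\<lambda>(i, y) g. (i, y \<otimes>\<^bsub>Q i\<^esub> \<pi> i g))"

lemma group_perm_wreath_sum_action:
  assumes "group H" "group P" "\<And>i. i \<in> I \<Longrightarrow> group (Q i)" "\<And>i. i \<in> I \<Longrightarrow> \<pi> i \<in> hom P (Q i)"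
  shows "group (perm_wreath H P (SIGMA i:I. carrier (Q i)) (sum_action Q \<pi>))"
proof -
  have action: "y \<otimes>\<^bsub>Q i\<^esub> \<pi> i \<one>\<^bsub>P\<^esub> = y \<and>
      (g \<in> carrier P \<longrightarrow> y \<otimes>\<^bsub>Q i\<^esub> \<pi> i g \<in> carrier (Q i) \<and> (g' \<in> carrier P \<longrightarrow>
        (y \<otimes>\<^bsub>Q i\<^esub> \<pi> i g) \<otimes>\<^bsub>Q i\<^esub> \<pi> i g' = y \<otimes>\<^bsub>Q i\<^esub> \<pi> i (g \<otimes>\<^bsub>P\<^esub> g')))"
    if "i \<in> I" "y \<in> carrier (Q i)" for i y g g'
  proof -
    interpret group_hom P "Q i" "\<pi> i"
      using assms(2-4) that(1) by (simp add: group_hom_def group_hom_axioms_def)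
    show ?thesis using that(2) by (simp add: H.m_assoc)
  qed
  show ?thesis
    by (rule group_perm_wreath[OF assms(1,2)]) (auto simp: sum_action_def action)
qed

lemma perm_wreath_sum_action_fibre_hom:
  assumes "i \<in> I" "group (Q i)" "\<pi> i \<in> hom P (Q i)"
  shows "(\<lambda>(F, g). ((\<lambda>y \<in> carrier (Q i). F (i, y)), \<pi> i g))
    \<in> hom (perm_wreath H P (SIGMA i:I. carrier (Q i)) (sum_action Q \<pi>)) (wreath H (Q i))"
proof -
  interpret Q: group "Q i" by (rule assms(2))
  show ?thesis
    unfolding wreath_eq_perm_wreath
    by (rule perm_wreath_pullback_hom[OF assms(3)]) (simp_all add: assms(1) sum_action_def)
qed

section \<open>Universal solutions\<close>

definition universal_solution :: "('h, 'c) monoid_scheme \<Rightarrow> ('q, 'd) monoid_scheme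
    \<Rightarrow> nat \<Rightarrow> nat \<Rightarrow> word list \<Rightarrow> (nat \<Rightarrow> 'q) \<Rightarrow> (nat \<Rightarrow> 'q) \<Rightarrow> bool" where
  "universal_solution H Q k n ws b v \<longleftrightarrow>
     (\<forall>f. (\<forall>i<k. f i \<in> carrier Q \<rightarrow>\<^sub>E carrier H) \<longrightarrow>
        (\<exists>\<phi>. (\<forall>j<n. \<phi> j \<in> carrier Q \<rightarrow>\<^sub>E carrier H) \<and>
           (\<forall>w \<in> set ws. eval_word (wreath H Q) (\<lambda>i. (f i, b i)) (\<lambda>j. (\<phi> j, v j)) w
              = \<one>\<^bsub>wreath H Q\<^esub>)))"

definition universal_solutions :: "('h, 'c) monoid_scheme \<Rightarrow> ('q, 'd) monoid_scheme
    \<Rightarrow> nat \<Rightarrow> nat \<Rightarrow> word list \<Rightarrow> (nat \<Rightarrow> 'q) \<Rightarrow> (nat \<Rightarrow> 'q) set" where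
  "universal_solutions H Q k n ws b =
     {v \<in> {..<n} \<rightarrow>\<^sub>E carrier Q. universal_solution H Q k n ws b v}"

lemma finite_universal_solutions:
  assumes "finite (carrier Q)"
  shows "finite (universal_solutions H Q k n ws b)"
proof (rule finite_subset)
  show "universal_solutions H Q k n ws b \<subseteq> {..<n} \<rightarrow>\<^sub>E carrier Q"
    by (auto simp: universal_solutions_def)
qed (simp add: assms finite_PiE)

lemma universal_solution_cong:
  assumes "\<forall>w \<in> set ws. word_in k n w" "\<And>i. i < k \<Longrightarrow> b i = b' i" "\<And>j. j < n \<Longrightarrow> v j = v' j"
  shows "universal_solution H Q k n ws b v \<longleftrightarrow> universal_solution H Q k n ws b' v'"
proof -
  have "eval_word (wreath H Q) (\<lambda>i. (f i, b i)) (\<lambda>j. (\<phi> j, v j)) w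
      = eval_word (wreath H Q) (\<lambda>i. (f i, b' i)) (\<lambda>j. (\<phi> j, v' j)) w"
    if "w \<in> set ws" for f \<phi> w
    using assms that by (intro eval_word_cong[of k n]) auto
  then show ?thesis unfolding universal_solution_def by simp
qed

lemma universal_solutionI:
  assumes A: "group A" "group H" "group Q"
    and ws: "\<forall>w \<in> set ws. word_in k n w" and c: "\<forall>i<k. c i \<in> carrier A"
    and z: "\<forall>j<n. z j \<in> carrier A" "\<forall>w \<in> set ws. eval_word A c z w = \<one>\<^bsub>A\<^esub>"
    and hom: "\<And>f. \<forall>i<k. f i \<in> carrier Q \<rightarrow>\<^sub>E carrier H \<Longrightarrow> \<exists>\<psi> \<in> hom A (wreath H Q).
      (\<forall>i<k. \<psi> (c i) = (f i, b i)) \<and> (\<forall>j<n. snd (\<psi> (z j)) = v j)"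
  shows "universal_solution H Q k n ws b v"
  unfolding universal_solution_def
proof (intro allI impI)
  fix f assume "\<forall>i<k. f i \<in> carrier Q \<rightarrow>\<^sub>E carrier H"
  from hom[OF this] obtain \<psi> where \<psi>: "\<psi> \<in> hom A (wreath H Q)" "\<forall>i<k. \<psi> (c i) = (f i, b i)"
    "\<forall>j<n. snd (\<psi> (z j)) = v j"
    by (elim bexE conjE)
  have W: "group (wreath H Q)" using group_wreath A(2,3) .
  define \<phi> where "\<phi> j = fst (\<psi> (z j))" for j
  have "\<forall>j<n. \<phi> j \<in> carrier Q \<rightarrow>\<^sub>E carrier H"
    using hom_in_carrier[OF \<psi>(1)] z(1) by (simp add: \<phi>_def carrier_wreath mem_Times_iff)
  moreover have "eval_word (wreath H Q) (\<lambda>i. (f i, b i)) (\<lambda>j. (\<phi> j, v j)) w = \<one>\<^bsub>wreath H Q\<^esub>"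
    if w: "w \<in> set ws" for w
  proof -
    have wi: "word_in k n w" using ws w by blast
    have "eval_word (wreath H Q) (\<lambda>i. (f i, b i)) (\<lambda>j. (\<phi> j, v j)) w
        = eval_word (wreath H Q) (\<psi> \<circ> c) (\<psi> \<circ> z) w"
      using \<psi>(2,3) by (intro eval_word_cong[OF wi]) (simp_all add: \<phi>_def prod_eq_iff)
    also have "\<dots> = \<psi> (eval_word A c z w)"
      by (rule eval_word_hom[OF A(1) W \<psi>(1) wi c z(1), symmetric])
    also have "\<dots> = \<one>\<^bsub>wreath H Q\<^esub>"
      using z(2) w hom_one[OF \<psi>(1) A(1) W] by simp
    finally show ?thesis .
  qed
  ultimately show "\<exists>\<phi>. (\<forall>j<n. \<phi> j \<in> carrier Q \<rightarrow>\<^sub>E carrier H) \<and>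
      (\<forall>w \<in> set ws. eval_word (wreath H Q) (\<lambda>i. (f i, b i)) (\<lambda>j. (\<phi> j, v j)) w
        = \<one>\<^bsub>wreath H Q\<^esub>)"
    by blast
qed

lemma common_universal_solution:
  fixes H :: "('h, 'c) monoid_scheme" and P :: "('p, 'd) monoid_scheme"
    and Q :: "'j \<Rightarrow> ('q, 'e) monoid_scheme"
  assumes H: "group H" "finite (carrier H)"
    and ws: "\<forall>w \<in> set ws. word_in k n w" and sys: "sys_fin k n ws"
    and P: "group P" "finite (carrier P)" and b: "\<forall>i<k. b i \<in> carrier P"
    and J: "finite J" and Q: "\<And>N. N \<in> J \<Longrightarrow> group (Q N) \<and> finite (carrier (Q N))"
    and \<pi>: "\<And>N. N \<in> J \<Longrightarrow> \<pi> N \<in> hom P (Q N)"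
  shows "\<exists>s. (\<forall>j<n. s j \<in> carrier P) \<and>
    (\<forall>N \<in> J. universal_solution H (Q N) k n ws (\<pi> N \<circ> b) (\<pi> N \<circ> s))"
proof -
  define I where "I = (SIGMA N:J. {..<k} \<rightarrow>\<^sub>E (carrier (Q N) \<rightarrow>\<^sub>E carrier H))"
  define \<Omega> where "\<Omega> = (SIGMA x:I. carrier (Q (fst x)))"
  define W where "W = perm_wreath H P \<Omega> (sum_action (\<lambda>x. Q (fst x)) (\<lambda>x. \<pi> (fst x)))"
  have W: "group W"
    unfolding W_def \<Omega>_def using Q \<pi>
    by (intro group_perm_wreath_sum_action[OF H(1) P(1)]) (auto simp: I_def)
  have "finite I"
    using J Q H(2) by (auto simp: I_def intro!: finite_PiE)
  then have "finite \<Omega>"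
    using Q by (auto simp: \<Omega>_def I_def)
  then have "finite (carrier W)"
    using P(2) H(2) by (simp add: W_def perm_wreath_def finite_PiE)
  define c where "c i = ((\<lambda>(x, y) \<in> \<Omega>. snd x i y), b i)" for i
  have c: "\<forall>i<k. c i \<in> carrier W"
    using b by (auto simp: c_def W_def perm_wreath_def \<Omega>_def I_def PiE_iff)
  obtain z where z: "\<forall>j<n. z j \<in> carrier W" "\<forall>w \<in> set ws. eval_word W c z w = \<one>\<^bsub>W\<^esub>"
    using sys_fin_solvable[OF sys W \<open>finite (carrier W)\<close> ws c] by blast
  have "universal_solution H (Q N) k n ws (\<pi> N \<circ> b) (\<pi> N \<circ> (snd \<circ> z))" if N: "N \<in> J" for N
  proof (rule universal_solutionI[OF W H(1) _ ws c z])
    show "group (Q N)" using Q[OF N] by blast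
    fix f assume f: "\<forall>i<k. f i \<in> carrier (Q N) \<rightarrow>\<^sub>E carrier H"
    define x where "x = (N, restrict f {..<k})"
    have x: "x \<in> I" using N f by (simp add: x_def I_def)
    let ?\<psi> = "\<lambda>(F, g). ((\<lambda>y \<in> carrier (Q N). F (x, y) :: 'h), \<pi> N g)"
    have "?\<psi> \<in> hom W (wreath H (Q N))"
      using perm_wreath_sum_action_fibre_hom[of x I "\<lambda>x. Q (fst x)" "\<lambda>x. \<pi> (fst x)"]
        x Q[OF N] \<pi>[OF N]
      unfolding W_def \<Omega>_def by (simp add: x_def)
    moreover have "?\<psi> (c i) = (f i, (\<pi> N \<circ> b) i)" if "i < k" for i
    proof -
      have "f i \<in> carrier (Q N) \<rightarrow>\<^sub>E carrier H" using f that by blast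
      then show ?thesis
        using that x by (simp add: c_def \<Omega>_def x_def cong: restrict_cong)
    qed
    moreover have "snd (?\<psi> (z j)) = (\<pi> N \<circ> (snd \<circ> z)) j" for j
      by (simp add: case_prod_beta)
    ultimately show "\<exists>\<psi> \<in> hom W (wreath H (Q N)). (\<forall>i<k. \<psi> (c i) = (f i, (\<pi> N \<circ> b) i)) \<and>
        (\<forall>j<n. snd (\<psi> (z j)) = (\<pi> N \<circ> (snd \<circ> z)) j)"
      by (intro bexI[where x = ?\<psi>] conjI allI impI) simp_all
  qed
  moreover have "\<forall>j<n. (snd \<circ> z) j \<in> carrier P"
    using z(1) by (auto simp: W_def perm_wreath_def)
  ultimately show ?thesis by blast
qed

section \<open>Compactness\<close>

lemma closedin_discrete_product_relation:
  assumes "i \<in> I" "j \<in> I"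
  shows "closedin (product_topology (\<lambda>i. discrete_topology (U i)) I)
    {p \<in> topspace (product_topology (\<lambda>i. discrete_topology (U i)) I). S (p i) (p j)}"
    (is "closedin ?T _")
proof -
  let ?Y = "prod_topology (discrete_topology (U i)) (discrete_topology (U j))"
  have "continuous_map ?T ?Y (\<lambda>p. (p i, p j))"
    by (intro continuous_map_pairedI continuous_map_product_projection assms)
  moreover have "closedin ?Y {(x, y) \<in> U i \<times> U j. S x y}"
    by (auto simp flip: prod_topology_discrete_topology)
  ultimately have "closedin ?T {p \<in> topspace ?T. (p i, p j) \<in> {(x, y) \<in> U i \<times> U j. S x y}}"
    by (rule closedin_continuous_map_preimage)
  moreover have "{p \<in> topspace ?T. (p i, p j) \<in> {(x, y) \<in> U i \<times> U j. S x y}}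
      = {p \<in> topspace ?T. S (p i) (p j)}"
    using assms by auto
  ultimately show ?thesis by simp
qed

lemma choice_from_finite_subfamilies:
  fixes U :: "'i \<Rightarrow> 'u set"
  assumes U: "\<And>i. i \<in> I \<Longrightarrow> finite (U i)"
    and sat: "\<And>J. finite J \<Longrightarrow> J \<subseteq> I \<Longrightarrow>
      \<exists>p. \<forall>i \<in> J. p i \<in> U i \<and> (\<forall>j \<in> J. R i j (p i) (p j))"
  shows "\<exists>p. \<forall>i \<in> I. p i \<in> U i \<and> (\<forall>j \<in> I. R i j (p i) (p j))"
proof -
  define T where "T = product_topology (\<lambda>i. discrete_topology (U i)) I"
  have T: "topspace T = (\<Pi>\<^sub>E i \<in> I. U i)" by (simp add: T_def)
  define D where "D c = {p \<in> topspace T. R (fst c) (snd c) (p (fst c)) (p (snd c))}" for c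
  have closed: "closedin T (D (i, j))" if "i \<in> I" "j \<in> I" for i j
    unfolding T_def D_def using closedin_discrete_product_relation[OF that] by simp
  define K where "K = insert (topspace T) (D ` (I \<times> I))"
  have compact: "compact_space T"
    using U by (simp add: T_def compact_space_product_topology compact_space_discrete_topology)
  have "\<Inter>F \<noteq> {}" if F: "finite F" "F \<subseteq> K" for F
  proof -
    have "F - {topspace T} \<subseteq> D ` (I \<times> I)" using F(2) unfolding K_def by blast
    from finite_subset_image[OF finite_Diff[OF F(1)] this]
    obtain P where P: "P \<subseteq> I \<times> I" "finite P" "F - {topspace T} = D ` P"
      by (elim exE conjE)
    define J where "J = fst ` P \<union> snd ` P"
    have "finite J" "J \<subseteq> I" using P(1,2) by (auto simp: J_def)
    from sat[OF this] obtain p where p: "\<forall>i \<in> J. p i \<in> U i \<and> (\<forall>j \<in> J. R i j (p i) (p j))"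
      by (elim exE)
    define q where "q = (\<lambda>i \<in> I. if i \<in> J then p i else (SOME x. x \<in> U i))"
    have "U i \<noteq> {}" if "i \<in> I" for i
      using sat[of "{i}"] that by auto
    then have "q \<in> topspace T"
      unfolding T q_def restrict_PiE_iff using p \<open>J \<subseteq> I\<close> by (simp add: some_in_eq)
    moreover have "q \<in> D c" if "c \<in> P" for c
    proof -
      have "fst c \<in> J" "snd c \<in> J" using that by (auto simp: J_def)
      moreover from this have "q (fst c) = p (fst c)" "q (snd c) = p (snd c)"
        using \<open>J \<subseteq> I\<close> by (auto simp: q_def)
      ultimately show ?thesis using \<open>q \<in> topspace T\<close> p by (simp add: D_def)
    qed
    ultimately have "q \<in> S" if "S \<in> F" for S
    proof (cases "S = topspace T")
      case False
      then have "S \<in> D ` P" using that P(3) by blast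
      then show ?thesis using \<open>\<And>c. c \<in> P \<Longrightarrow> q \<in> D c\<close> by blast
    qed (use \<open>q \<in> topspace T\<close> in simp)
    then show ?thesis by blast
  qed
  moreover have "\<forall>S \<in> K. closedin T S"
    using closed unfolding K_def by blast
  ultimately have "\<Inter>K \<noteq> {}"
    using compact[unfolded compact_space_fip, THEN spec[of _ K]] by blast
  then obtain p where p: "p \<in> topspace T" "\<And>c. c \<in> I \<times> I \<Longrightarrow> p \<in> D c"
    unfolding K_def by blast
  have "p i \<in> U i" if "i \<in> I" for i
    using p(1) that by (simp add: T PiE_iff)
  moreover have "R i j (p i) (p j)" if "i \<in> I" "j \<in> I" for i j
    using p(2)[of "(i, j)"] that by (simp add: D_def)
  ultimately show ?thesis by blast
qed

section \<open>Finite quotients and the profinite completion\<close>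

lemma fin_index_normalsD:
  assumes "group G" "N \<in> fin_index_normals G"
  shows "N \<lhd> G" "group (G Mod N)" "finite (carrier (G Mod N))"
  using assms normal.factorgroup_is_group by (auto simp: fin_index_normals_def FactGroup_def)

lemma (in group) set_mult_r_coset_absorb:
  assumes "subgroup M G" "subgroup N G" "M \<subseteq> N" "x \<in> carrier G"
  shows "N <#> (M #> x) = N #> x"
proof -
  have "N <#> M \<subseteq> N"
    using mono_set_mult[OF order_refl assms(3)] subgroup_mult_id[OF assms(2)] by blast
  moreover have "N \<subseteq> N <#> M"
    using subgroup.one_closed[OF assms(1)] subgroup.mem_carrier[OF assms(2)]
    by (force simp: set_mult_def)
  ultimately have "N <#> M = N" by blast
  then show ?thesis
    using setmult_rcos_assoc[OF subgroup.subset[OF assms(2)] subgroup.subset[OF assms(1)] assms(4)]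
    by simp
qed

lemma quotient_projection_hom:
  fixes G (structure)
  assumes "group G" "M \<lhd> G" "N \<lhd> G" "M \<subseteq> N"
  shows "(\<lambda>C. N <#>\<^bsub>G\<^esub> C) \<in> hom (G Mod M) (G Mod N)"
proof -
  interpret group G by (rule assms(1))
  have proj: "N <#> (M #> x) = N #> x" if "x \<in> carrier G" for x
    using set_mult_r_coset_absorb normal_imp_subgroup assms(2-4) that by blast
  show ?thesis
  proof (rule homI)
    fix C assume "C \<in> carrier (G Mod M)"
    then obtain x where "x \<in> carrier G" "C = M #> x" by (auto simp: FactGroup_def RCOSETS_def)
    then show "N <#> C \<in> carrier (G Mod N)" using proj by (auto simp: FactGroup_def RCOSETS_def)
  next
    fix C D assume "C \<in> carrier (G Mod M)" "D \<in> carrier (G Mod M)"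
    then obtain x y where "x \<in> carrier G" "C = M #> x" "y \<in> carrier G" "D = M #> y"
      by (auto simp: FactGroup_def RCOSETS_def)
    then show "N <#> (C \<otimes>\<^bsub>G Mod M\<^esub> D) = (N <#> C) \<otimes>\<^bsub>G Mod N\<^esub> (N <#> D)"
      using proj normal.rcos_sum[OF assms(2)] normal.rcos_sum[OF assms(3)] by simp
  qed
qed

lemma profinite_completion_project:
  fixes G (structure)
  assumes "group G" "g \<in> profinite_completion G"
    and "M \<in> fin_index_normals G" "N \<in> fin_index_normals G" "M \<subseteq> N"
  shows "N <#>\<^bsub>G\<^esub> g M = g N"
proof -
  interpret group G by (rule assms(1))
  have M: "subgroup M G" and N: "subgroup N G"
    using assms(1,3,4) fin_index_normalsD(1) normal_imp_subgroup by blast+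
  obtain x where x: "x \<in> carrier G" "g M = M #> x"
    using assms(2,3) by (auto simp: profinite_completion_def FactGroup_def RCOSETS_def)
  obtain y where y: "y \<in> carrier G" "g N = N #> y"
    using assms(2,4) by (auto simp: profinite_completion_def FactGroup_def RCOSETS_def)
  have "g M \<subseteq> g N"
    using assms(2-5) by (simp add: profinite_completion_def)
  then have "x \<in> N #> y"
    using x y rcos_self[OF x(1) M] by blast
  then have "N #> x = g N"
    using repr_independence[OF _ y(1) N] y(2) by simp
  then show ?thesis
    using x set_mult_r_coset_absorb[OF M N assms(5) x(1)] by simp
qed

lemma (in group) r_coset_Int:
  assumes "subgroup N1 G" "subgroup N2 G" "x \<in> carrier G"
  shows "(N1 \<inter> N2) #> x = (N1 #> x) \<inter> (N2 #> x)"
proof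
  show "(N1 #> x) \<inter> (N2 #> x) \<subseteq> (N1 \<inter> N2) #> x"
  proof
    fix y assume "y \<in> (N1 #> x) \<inter> (N2 #> x)"
    then obtain h1 h2 where h: "h1 \<in> N1" "h2 \<in> N2" "y = h1 \<otimes> x" "y = h2 \<otimes> x"
      unfolding r_coset_def by blast
    moreover have "h1 \<in> carrier G" "h2 \<in> carrier G"
      using subgroup.mem_carrier[OF assms(1) h(1)] subgroup.mem_carrier[OF assms(2) h(2)] .
    ultimately have "h1 = h2" using assms(3) by simp
    then show "y \<in> (N1 \<inter> N2) #> x" using h unfolding r_coset_def by blast
  qed
qed (unfold r_coset_def, blast)

lemma fin_index_normals_Int:
  fixes G (structure)
  assumes "group G" "N1 \<in> fin_index_normals G" "N2 \<in> fin_index_normals G"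
  shows "N1 \<inter> N2 \<in> fin_index_normals G"
proof -
  interpret group G by (rule assms(1))
  have N: "N1 \<lhd> G" "N2 \<lhd> G" and fin: "finite (rcosets N1)" "finite (rcosets N2)"
    using assms(2,3) by (auto simp: fin_index_normals_def)
  have "N1 \<inter> N2 \<lhd> G"
  proof (rule normal_invI)
    show "subgroup (N1 \<inter> N2) G"
      using subgroups_Inter_pair[OF normal_imp_subgroup[OF N(1)] normal_imp_subgroup[OF N(2)]] .
    fix x h assume "x \<in> carrier G" "h \<in> N1 \<inter> N2"
    then show "x \<otimes> h \<otimes> inv x \<in> N1 \<inter> N2"
      using normal.inv_op_closed2[OF N(1)] normal.inv_op_closed2[OF N(2)] by blast
  qed
  moreover have "rcosets (N1 \<inter> N2) \<subseteq> (\<lambda>(A, B). A \<inter> B) ` ((rcosets N1) \<times> (rcosets N2))"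
  proof
    fix C assume "C \<in> rcosets (N1 \<inter> N2)"
    then obtain x where x: "x \<in> carrier G" "C = (N1 \<inter> N2) #> x" by (auto simp: RCOSETS_def)
    then have "C = (\<lambda>(A, B). A \<inter> B) (N1 #> x, N2 #> x)"
      using r_coset_Int[OF normal_imp_subgroup[OF N(1)] normal_imp_subgroup[OF N(2)]] by simp
    moreover have "(N1 #> x, N2 #> x) \<in> (rcosets N1) \<times> (rcosets N2)"
      using x(1) by (auto simp: RCOSETS_def)
    ultimately show "C \<in> (\<lambda>(A, B). A \<inter> B) ` ((rcosets N1) \<times> (rcosets N2))" by blast
  qed
  then have "finite (rcosets (N1 \<inter> N2))"
    using fin by (blast intro: finite_subset finite_imageI finite_cartesian_product)
  ultimately show ?thesis by (simp add: fin_index_normals_def)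
qed

lemma carrier_in_fin_index_normals:
  fixes G (structure)
  assumes "group G"
  shows "carrier G \<in> fin_index_normals G"
proof -
  interpret group G by (rule assms)
  have "carrier G \<lhd> G" by (rule normal_invI) (auto intro: subgroup_self)
  moreover have "rcosets (carrier G) \<subseteq> {carrier G}"
  proof
    fix C assume "C \<in> rcosets (carrier G)"
    then obtain x where "x \<in> carrier G" "C = carrier G #> x" unfolding RCOSETS_def by blast
    then show "C \<in> {carrier G}" using coset_join2[OF _ subgroup_self] by simp
  qed
  then have "finite (rcosets (carrier G))" using finite_subset by blast
  ultimately show ?thesis by (simp add: fin_index_normals_def)
qed

lemma fin_index_normals_Inter:
  assumes "group G" "finite F" "F \<subseteq> fin_index_normals G"
  shows "carrier G \<inter> \<Inter>F \<in> fin_index_normals G"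
  using assms(2,3)
proof (induction F rule: finite_induct)
  case (insert N F)
  then have "N \<inter> (carrier G \<inter> \<Inter>F) \<in> fin_index_normals G"
    using fin_index_normals_Int[OF assms(1)] by simp
  moreover have "carrier G \<inter> \<Inter>(insert N F) = N \<inter> (carrier G \<inter> \<Inter>F)" by auto
  ultimately show ?case by simp
qed (simp add: carrier_in_fin_index_normals[OF assms(1)])

lemma finite_compatible_universal_solutions:
  assumes G: "group G" and H: "group H" "finite (carrier H)"
    and ws: "\<forall>w \<in> set ws. word_in k n w" and sys: "sys_fin k n ws"
    and a: "\<forall>i<k. a i \<in> profinite_completion G"
    and NN: "finite NN" "NN \<subseteq> fin_index_normals G"
  shows "\<exists>v. \<forall>N \<in> NN. v N \<in> universal_solutions H (G Mod N) k n ws (\<lambda>i. a i N) \<and>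
    (\<forall>N' \<in> NN. N \<subseteq> N' \<longrightarrow> (\<forall>j<n. v N j \<subseteq> v N' j))"
proof -
  define M where "M = carrier G \<inter> \<Inter>NN"
  have M: "M \<in> fin_index_normals G"
    unfolding M_def by (rule fin_index_normals_Inter[OF G NN])
  have MN: "M \<subseteq> N" if "N \<in> NN" for N
    using that by (auto simp: M_def)
  have proj: "(\<lambda>C. N <#>\<^bsub>G\<^esub> C) \<in> hom (G Mod M) (G Mod N)" if "N \<in> NN" for N
    using quotient_projection_hom[OF G] fin_index_normalsD(1)[OF G] M NN(2) MN that by blast
  have "\<forall>i<k. a i M \<in> carrier (G Mod M)"
    using a M by (simp add: profinite_completion_def)
  then obtain s where s: "\<forall>j<n. s j \<in> carrier (G Mod M)"
    "\<forall>N \<in> NN. universal_solution H (G Mod N) k n ws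
       ((\<lambda>C. N <#>\<^bsub>G\<^esub> C) \<circ> (\<lambda>i. a i M)) ((\<lambda>C. N <#>\<^bsub>G\<^esub> C) \<circ> s)"
    using common_universal_solution[OF H ws sys, of "G Mod M" "\<lambda>i. a i M" NN "\<lambda>N. G Mod N"]
      fin_index_normalsD(2,3)[OF G] M NN proj by blast
  define v where "v N = (\<lambda>j \<in> {..<n}. N <#>\<^bsub>G\<^esub> s j)" for N
  have "v N \<in> {..<n} \<rightarrow>\<^sub>E carrier (G Mod N)
      \<and> universal_solution H (G Mod N) k n ws (\<lambda>i. a i N) (v N)" if N: "N \<in> NN" for N
  proof
    show "v N \<in> {..<n} \<rightarrow>\<^sub>E carrier (G Mod N)"
      using hom_in_carrier[OF proj[OF N]] s(1) by (auto simp: v_def)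
    have project: "N <#>\<^bsub>G\<^esub> a i M = a i N" if "i < k" for i
      using profinite_completion_project[OF G _ M _ MN[OF N]] a that N NN(2) by blast
    have "universal_solution H (G Mod N) k n ws
        ((\<lambda>C. N <#>\<^bsub>G\<^esub> C) \<circ> (\<lambda>i. a i M)) ((\<lambda>C. N <#>\<^bsub>G\<^esub> C) \<circ> s)
      \<longleftrightarrow> universal_solution H (G Mod N) k n ws (\<lambda>i. a i N) (v N)"
      by (rule universal_solution_cong[OF ws]) (simp_all add: project v_def)
    then show "universal_solution H (G Mod N) k n ws (\<lambda>i. a i N) (v N)"
      using s(2) N by blast
  qed
  moreover have "v N j \<subseteq> v N' j" if "N \<subseteq> N'" for N N' j
    using that by (simp add: v_def mono_set_mult)
  ultimately show ?thesis
    by (intro exI[of _ v]) (auto simp: universal_solutions_def)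
qed

theorem lemma2:
  fixes G :: "'a monoid" and H :: "'h monoid"
    and k n :: nat and ws :: "word list" and a :: "nat \<Rightarrow> ('a set \<Rightarrow> 'a set)"
  assumes "group G" and "finitely_generated G" and "residually_finite G"
    and "group H" and "finite (carrier H)"
    and "\<forall>w \<in> set ws. word_in k n w"
    and "sys_fin k n ws"
    and "\<forall>i<k. a i \<in> profinite_completion G"
  shows "\<exists>u. (\<forall>j<n. u j \<in> profinite_completion G) \<and>
           (\<forall>N \<in> fin_index_normals G. \<forall>f.
              (\<forall>i<k. f i \<in> carrier (G Mod N) \<rightarrow>\<^sub>E carrier H) \<longrightarrow>
              (\<exists>\<phi>. (\<forall>j<n. \<phi> j \<in> carrier (G Mod N) \<rightarrow>\<^sub>E carrier H) \<and>
                  (\<forall>w \<in> set ws.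
                     eval_word (wreath H (G Mod N)) (\<lambda>i. (f i, a i N)) (\<lambda>j. (\<phi> j, u j N)) w
                       = \<one>\<^bsub>wreath H (G Mod N)\<^esub>)))"
proof -
  define U where "U N = universal_solutions H (G Mod N) k n ws (\<lambda>i. a i N)" for N
  have "\<exists>v. \<forall>N \<in> fin_index_normals G. v N \<in> U N \<and>
      (\<forall>N' \<in> fin_index_normals G. N \<subseteq> N' \<longrightarrow> (\<forall>j<n. v N j \<subseteq> v N' j))"
  proof (rule choice_from_finite_subfamilies)
    show "finite (U N)" if "N \<in> fin_index_normals G" for N
      unfolding U_def using finite_universal_solutions fin_index_normalsD(3)[OF assms(1) that] .
  qed (simp add: U_def finite_compatible_universal_solutions[OF assms(1,4-8)])
  then obtain v where v: "\<forall>N \<in> fin_index_normals G. v N \<in> U N \<and>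
      (\<forall>N' \<in> fin_index_normals G. N \<subseteq> N' \<longrightarrow> (\<forall>j<n. v N j \<subseteq> v N' j))"
    by (elim exE)
  define u where "u j N = (if N \<in> fin_index_normals G then v N j else undefined)" for j N
  have "u j \<in> profinite_completion G" if "j < n" for j
    using v that
    by (auto simp: profinite_completion_def u_def U_def universal_solutions_def PiE_iff)
  moreover have "universal_solution H (G Mod N) k n ws (\<lambda>i. a i N) (\<lambda>j. u j N)"
    if "N \<in> fin_index_normals G" for N
    using v that by (simp add: U_def u_def universal_solutions_def)
  ultimately show ?thesis
    unfolding universal_solution_def by blast
qed

end
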